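(* Suppose Assumption A1 holds, $\mathbf X\sim\mu\in\mathcal P_{ac}(\mathbb R^p)$, and $\mathcal G$ acts freely on $\mathcal GB$. Then for $(\mathbf x_0,\mathbf y_0)$ in a set of full measure under the law of $(\mathbf X,R(\mathbf X))$, the minimizer $S(\mathbf x_0,\mathbf y_0)=\arg\min_{Q\in\mathcal G}\|Q^\top\mathbf x_0-\mathbf y_0\|^2$ is unique, and $S$ is continuous at $(\mathbf x_0,\mathbf y_0)$ in the sense that for every sequence $(\mathbf x_n,\mathbf y_n)\to(\mathbf x_0,\mathbf y_0)$ and every choice of minimizers $Q_n\in\arg\min_{Q\in\mathcal G}\|Q^\top\mathbf x_n-\mathbf y_n\|^2$, $Q_n\to S(\mathbf x_0,\mathbf y_0)$.
   Context: $\mathcal G$ is a compact subgroup of $\mathrm O(p)$; $\mathrm{Uniform}(\mathcal G)$ its normalized Haar measure; $\mathcal P_{ac}(\mathbb R^p)$ Borel probability measures with a Lebesgue density; $\nu$ a fixed Borel probability measure. A1: there is a Borel $B$ with $\nu(B)=1$ such that every orbit $\{Q\mathbf x:Q\in\mathcal G\}$ meets $B$ in at most one point; $\mathcal GB=\{Q\mathbf x:Q\in\mathcal G,\mathbf x\in B\}$; $q:\mathcal GB\to B$, $q(Q\mathbf x)=\mathbf x$. $\mathcal G$ acts freely on $\mathcal GB$ if $Q\mathbf y=\mathbf y$ with $\mathbf y\in B$, $Q\in\mathcal G$ implies $Q=I$. Cost $c(\mathbf x,\mathbf h)=\min_{Q\in\mathcal G}\|Q^\top\mathbf x-\mathbf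 h\|^2$. $R$ is the population rank map: the $\mu$-a.e. unique Borel map such that the law of $(\mathbf X,R(\mathbf X))$ is the unique coupling of $\mu$ and $\nu$ whose support is $c$-cyclically monotone (i.e. for all $N$ and $(\mathbf x_i,\mathbf y_i)$ in the support, $\sum_{i=1}^Nc(\mathbf x_i,\mathbf y_i)\le\sum_{i=1}^Nc(\mathbf x_i,\mathbf y_{i+1})$, $\mathbf y_{N+1}=\mathbf y_1$); equivalently $R=q\circ\nabla\psi$ where $\nabla\psi$ is the a.e. unique gradient of a convex function pushing the law of $S\mathbf X$ to that of $S\mathbf H$ ($S\sim\mathrm{Uniform}(\mathcal G)$, $\mathbf H\sim\nu$, independent). *)

theory Defs
  imports "HOL-Probability.Probability"
begin

type_synonym 'p vec = "real ^ 'p"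
type_synonym 'p mat = "real ^ 'p ^ 'p"

definition compact_orth_subgroup :: "'p::finite mat set \<Rightarrow> bool" where
  "compact_orth_subgroup G \<longleftrightarrow> compact G \<and> G \<subseteq> {Q. orthogonal_matrix Q} \<and>
     mat 1 \<in> G \<and> (\<forall>Q\<in>G. \<forall>Q'\<in>G. Q ** Q' \<in> G) \<and> (\<forall>Q\<in>G. transpose Q \<in> G)"

definition costG :: "'p::finite mat set \<Rightarrow> 'p vec \<Rightarrow> 'p vec \<Rightarrow> real" where
  "costG G x h = (INF Q\<in>G. (norm (transpose Q *v x - h))\<^sup>2)"

definition argminG :: "'p::finite mat set \<Rightarrow> 'p vec \<Rightarrow> 'p vec \<Rightarrow> 'p mat set" where
  "argminG G x y = {Q \<in> G. \<forall>Q'\<in>G. (norm (transpose Q *v x - y))\<^sup>2 \<le> (norm (transpose Q' *v x - y))\<^sup>2}"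

definition msupport :: "'a::topological_space measure \<Rightarrow> 'a set" where
  "msupport M = {z. \<forall>U. open U \<and> z \<in> U \<longrightarrow> emeasure M U > 0}"

definition c_cyclically_monotone :: "('a \<Rightarrow> 'b \<Rightarrow> real) \<Rightarrow> ('a \<times> 'b) set \<Rightarrow> bool" where
  "c_cyclically_monotone c \<Gamma> \<longleftrightarrow>
     (\<forall>N::nat. \<forall>xs ys. N > 0 \<longrightarrow> (\<forall>i<N. (xs i, ys i) \<in> \<Gamma>) \<longrightarrow>
        (\<Sum>i<N. c (xs i) (ys i)) \<le> (\<Sum>i<N. c (xs i) (ys ((i + 1) mod N))))"

end

theory Submission
  imports Defs
begin

text \<open>Let \<open>\<Gamma>\<close> be the support of the law of (X, R X) and relate x to Q y whenever
  (x, y) \<in> \<Gamma> and Q is an optimal alignment of y to x. Expanding the cost,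
  c-cyclical monotonicity of \<open>\<Gamma>\<close> for two points says exactly that this relation is monotone,
  \<open>0 \<le> (x - x') \<bullet> (g - g')\<close>. A monotone relation is single-valued off a Lebesgue-null set:
  on each line in a coordinate direction its jump points are separated by distinct rationals,
  so they are countable, and Fubini does the rest. As \<open>\<mu>\<close> is absolutely continuous, for almost
  every (x, y) the point Q y is the same for all minimizers Q, and since G acts freely at y \<in> B
  the minimizer itself is unique. Continuity then follows from compactness of G: every limit
  point of minimizers at (x_n, y_n) is a minimizer at (x, y).\<close>

lemma null_sets_lborel_if_countable_on_lines:
  fixes S :: "'a::euclidean_space set" and b :: 'a
  assumes S: "S \<in> sets borel" and b: "b \<noteq> 0"
    and countable_line: "\<And>x. countable {t::real. x + t *\<^sub>R b \<in> S}"
  shows "S \<in> null_sets lborel"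
proof -
  define W where "W = {z::'a \<times> real. fst z + snd z *\<^sub>R b \<in> S}"
  have W: "W \<in> sets (lborel \<Otimes>\<^sub>M lborel)"
  proof -
    have "(\<lambda>z::'a \<times> real. fst z + snd z *\<^sub>R b) \<in> borel_measurable (lborel \<Otimes>\<^sub>M lborel)"
      by measurable
    from measurable_sets[OF this S] show ?thesis
      by (simp add: W_def vimage_def space_pair_measure)
  qed
  have "emeasure (lborel \<Otimes>\<^sub>M lborel) W = (\<integral>\<^sup>+x. emeasure lborel (Pair x -` W) \<partial>lborel)"
    by (rule lborel.emeasure_pair_measure_alt[OF W])
  also have "\<dots> = 0"
  proof -
    have "Pair x -` W = {t. x + t *\<^sub>R b \<in> S}" for x
      by (simp add: W_def vimage_def)
    then have "emeasure lborel (Pair x -` W) = 0" for x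
      using countable_imp_null_set_lborel[OF countable_line] by (simp add: null_sets_def)
    then show ?thesis by simp
  qed
  finally have W_null: "emeasure (lborel \<Otimes>\<^sub>M lborel) W = 0" .
  have "emeasure (lborel \<Otimes>\<^sub>M lborel) W = (\<integral>\<^sup>+t. emeasure lborel ((\<lambda>x. (x, t)) -` W) \<partial>lborel)"
    by (rule pair_sigma_finite.emeasure_pair_measure_alt2[OF _ W])
      (intro pair_sigma_finite.intro sigma_finite_lborel)
  also have "\<dots> = (\<integral>\<^sup>+(t::real). emeasure lborel S \<partial>lborel)"
  proof -
    have "(\<lambda>x. (x, t)) -` W = (\<lambda>x. t *\<^sub>R b + x) -` S \<inter> space lborel" for t
      by (auto simp: W_def add.commute)
    then have "emeasure lborel ((\<lambda>x. (x, t)) -` W) = emeasure (distr lborel borel ((+) (t *\<^sub>R b))) S" for t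
      using S by (simp add: emeasure_distr)
    then have "emeasure lborel ((\<lambda>x. (x, t)) -` W) = emeasure lborel S" for t
      by (simp add: lborel_distr_plus)
    then show ?thesis by simp
  qed
  also have "\<dots> = emeasure lborel S * \<infinity>"
    by simp
  finally have "emeasure lborel S = 0"
    using W_null by (simp add: ennreal_mult_eq_top_iff)
  then show ?thesis using S by auto
qed

definition monotone_rel :: "('a::real_inner \<Rightarrow> 'a \<Rightarrow> bool) \<Rightarrow> bool" where
  "monotone_rel T \<longleftrightarrow> (\<forall>x g x' g'. T x g \<longrightarrow> T x' g' \<longrightarrow> 0 \<le> (x - x') \<bullet> (g - g'))"

definition jump_set :: "('a::real_inner \<Rightarrow> 'a \<Rightarrow> bool) \<Rightarrow> 'a \<Rightarrow> 'a set" where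
  "jump_set T b = {x. \<exists>g g'. T x g \<and> T x g' \<and> g \<bullet> b < g' \<bullet> b}"

lemma monotone_rel_on_line:
  assumes "monotone_rel T" "t < t'" "T (x + t *\<^sub>R b) g" "T (x + t' *\<^sub>R b) g'"
  shows "g \<bullet> b \<le> g' \<bullet> b"
proof -
  have "0 \<le> ((x + t *\<^sub>R b) - (x + t' *\<^sub>R b)) \<bullet> (g - g')"
    using assms(1,3,4) unfolding monotone_rel_def by blast
  also have "\<dots> = (t - t') * (g \<bullet> b - g' \<bullet> b)"
    by (simp add: algebra_simps inner_commute)
  finally show ?thesis
    using \<open>t < t'\<close> by (simp add: zero_le_mult_iff)
qed

lemma countable_jump_set_on_line:
  assumes T: "monotone_rel T"
  shows "countable {t. x + t *\<^sub>R b \<in> jump_set T b}" (is "countable ?A")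
proof -
  have "\<forall>t\<in>?A. \<exists>r g g'. r \<in> \<rat> \<and> T (x + t *\<^sub>R b) g \<and> T (x + t *\<^sub>R b) g' \<and> g \<bullet> b < r \<and> r < g' \<bullet> b"
    unfolding jump_set_def by (blast dest: Rats_dense_in_real)
  then obtain r where r: "\<And>t. t \<in> ?A \<Longrightarrow> r t \<in> \<rat> \<and>
      (\<exists>g g'. T (x + t *\<^sub>R b) g \<and> T (x + t *\<^sub>R b) g' \<and> g \<bullet> b < r t \<and> r t < g' \<bullet> b)"
    by metis
  \<comment> \<open>jumps at different points of the line occupy disjoint intervals of values\<close>
  have r_less: "r t < r t'" if "t \<in> ?A" "t' \<in> ?A" "t < t'" for t t'
    using r[OF that(1)] r[OF that(2)] monotone_rel_on_line[OF T \<open>t < t'\<close>]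
    by (meson le_less_trans less_trans)
  have "inj_on r ?A"
    by (rule inj_onI) (metis r_less linorder_neq_iff)
  moreover have "r ` ?A \<subseteq> \<rat>"
    using r by blast
  ultimately show ?thesis
    using countable_rat countable_image_inj_on countable_subset by metis
qed

lemma jump_set_null:
  fixes T :: "'a::euclidean_space \<Rightarrow> 'a \<Rightarrow> bool"
  assumes "monotone_rel T" "jump_set T b \<in> sets borel" "b \<noteq> 0"
  shows "jump_set T b \<in> null_sets lborel"
  using assms by (auto intro: null_sets_lborel_if_countable_on_lines countable_jump_set_on_line)

lemma single_valued_off_jump_sets:
  fixes T :: "'a::euclidean_space \<Rightarrow> 'a \<Rightarrow> bool"
  assumes "\<forall>b\<in>Basis. x \<notin> jump_set T b" "T x g" "T x g'"
  shows "g = g'"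
proof (rule euclidean_eqI)
  fix b :: 'a assume "b \<in> Basis"
  with assms have "\<not> g \<bullet> b < g' \<bullet> b" "\<not> g' \<bullet> b < g \<bullet> b"
    unfolding jump_set_def by blast+
  then show "g \<bullet> b = g' \<bullet> b" by linarith
qed

lemma borel_fst_image_closed:
  fixes C :: "('a::euclidean_space \<times> 'b::euclidean_space) set"
  assumes "closed C"
  shows "fst ` C \<in> sets borel"
proof -
  have "C = (\<Union>m::nat. C \<inter> cball 0 (real m))"
    using real_arch_simple by auto
  then have "fst ` C = (\<Union>m::nat. fst ` (C \<inter> cball 0 (real m)))"
    by (metis image_UN)
  moreover have "closed (fst ` (C \<inter> cball 0 (real m)))" for m
    using closed_Int_compact[OF assms compact_cball]
    by (intro compact_imp_closed compact_continuous_image continuous_intros)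
  ultimately show ?thesis
    by (auto intro: borel_closed)
qed

lemma compact_orth_subgroupD:
  assumes "compact_orth_subgroup G"
  shows "compact G" "closed G" "G \<noteq> {}" "\<And>Q. Q \<in> G \<Longrightarrow> orthogonal_matrix Q"
    "\<And>Q Q'. Q \<in> G \<Longrightarrow> Q' \<in> G \<Longrightarrow> Q ** Q' \<in> G" "\<And>Q. Q \<in> G \<Longrightarrow> transpose Q \<in> G"
  using assms by (auto simp: compact_orth_subgroup_def compact_imp_closed)

definition match_cost :: "'p::finite mat \<Rightarrow> 'p vec \<Rightarrow> 'p vec \<Rightarrow> real" where
  "match_cost Q x y = (norm (transpose Q *v x - y))\<^sup>2"

lemma argminG_iff:
  "Q \<in> argminG G x y \<longleftrightarrow> Q \<in> G \<and> (\<forall>Q'\<in>G. match_cost Q x y \<le> match_cost Q' x y)"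
  by (simp add: argminG_def match_cost_def)

lemma costG_eq_match_cost: "Q \<in> argminG G x y \<Longrightarrow> costG G x y = match_cost Q x y"
  unfolding costG_def match_cost_def[symmetric]
  by (intro cInf_eq_minimum) (auto simp: argminG_iff)

lemma costG_le_match_cost: "Q \<in> G \<Longrightarrow> costG G x y \<le> match_cost Q x y"
  unfolding costG_def match_cost_def[symmetric]
  by (rule cINF_lower) (auto simp: bdd_below_def match_cost_def intro!: exI[of _ 0])

lemma match_cost_orthogonal:
  assumes "orthogonal_matrix Q"
  shows "match_cost Q x y = (norm x)\<^sup>2 + (norm y)\<^sup>2 - 2 * (x \<bullet> (Q *v y))"
proof -
  define a where "a = transpose Q *v x"
  have "orthogonal_transformation ((*v) (transpose Q))"
    using assms by (simp add: orthogonal_transformation_matrix)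
  then have "norm a = norm x"
    unfolding a_def by (rule orthogonal_transformation_norm)
  moreover have "a \<bullet> y = x \<bullet> (Q *v y)"
    unfolding a_def by (metis dot_lmul_matrix transpose_matrix_vector)
  moreover have "match_cost Q x y = a \<bullet> a - 2 * (a \<bullet> y) + y \<bullet> y"
    unfolding match_cost_def power2_norm_eq_inner a_def[symmetric]
    by (simp add: inner_diff inner_commute)
  ultimately show ?thesis
    by (simp add: power2_norm_eq_inner[symmetric])
qed

lemma continuous_on_matrix_vector_mult [continuous_intros]:
  fixes f :: "'a::topological_space \<Rightarrow> real^'m^'n" and g :: "'a \<Rightarrow> real^'m"
  assumes "continuous_on S f" "continuous_on S g"
  shows "continuous_on S (\<lambda>w. f w *v g w)"
  unfolding matrix_vector_mult_def
  by (intro continuous_on_vec_lambda continuous_on_sum continuous_on_mult continuous_on_component assms)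

lemma continuous_on_transpose [continuous_intros]:
  fixes f :: "'a::topological_space \<Rightarrow> real^'m^'n"
  assumes "continuous_on S f"
  shows "continuous_on S (\<lambda>w. transpose (f w))"
  unfolding transpose_def
  by (intro continuous_on_vec_lambda continuous_on_component assms)

lemma continuous_on_match_cost [continuous_intros]:
  assumes "continuous_on S f" "continuous_on S g" "continuous_on S h"
  shows "continuous_on S (\<lambda>w. match_cost (f w) (g w) (h w))"
  unfolding match_cost_def by (intro continuous_intros assms)

lemma tendsto_match_cost:
  assumes "Qs \<longlonglongrightarrow> Q" "xs \<longlonglongrightarrow> x" "ys \<longlonglongrightarrow> y"
  shows "(\<lambda>n. match_cost (Qs n) (xs n) (ys n)) \<longlonglongrightarrow> match_cost Q x y"
proof -
  have "continuous_on UNIV (\<lambda>(Q, x, y). match_cost Q x y)"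
    by (simp add: case_prod_beta) (intro continuous_intros)
  from continuous_on_tendsto_compose[OF this tendsto_Pair[OF assms(1) tendsto_Pair[OF assms(2,3)]]]
  show ?thesis by simp
qed

lemma argminG_nonempty:
  assumes "compact_orth_subgroup G"
  shows "argminG G x y \<noteq> {}"
proof -
  have "continuous_on G (\<lambda>Q. match_cost Q x y)"
    by (intro continuous_intros)
  then obtain Q where "Q \<in> G" "\<forall>Q'\<in>G. match_cost Q x y \<le> match_cost Q' x y"
    using continuous_attains_inf compact_orth_subgroupD(1,3)[OF assms] by blast
  then have "Q \<in> argminG G x y"
    by (simp add: argminG_iff)
  then show ?thesis by blast
qed

lemma closed_argminG_graph:
  assumes "closed G"
  shows "closed {(x, y, Q). Q \<in> argminG G x y}"
proof -
  have "{(x, y, Q). Q \<in> argminG G x y} = {w. snd (snd w) \<in> G \<and>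
      (\<forall>Q'. Q' \<in> G \<longrightarrow> match_cost (snd (snd w)) (fst w) (fst (snd w)) \<le> match_cost Q' (fst w) (fst (snd w)))}"
    by (auto simp: argminG_iff)
  also have "closed \<dots>"
    using closed_vimage_snd[OF closed_vimage_snd[OF assms]]
    by (intro closed_Collect_conj closed_Collect_all closed_Collect_imp open_Collect_const
        closed_Collect_le continuous_intros) (simp_all add: vimage_def)
  finally show ?thesis .
qed

lemma orbit_point_determines_group_element:
  assumes G: "compact_orth_subgroup G" and free: "\<forall>Q\<in>G. Q *v y = y \<longrightarrow> Q = mat 1"
    and "Q1 \<in> G" "Q2 \<in> G" "Q1 *v y = Q2 *v y"
  shows "Q1 = Q2"
proof -
  have Q2: "transpose Q2 ** Q2 = mat 1" "Q2 ** transpose Q2 = mat 1"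
    using compact_orth_subgroupD(4)[OF G \<open>Q2 \<in> G\<close>] by (simp_all add: orthogonal_matrix_def)
  have "(transpose Q2 ** Q1) *v y = (transpose Q2 ** Q2) *v y"
    using \<open>Q1 *v y = Q2 *v y\<close> by (simp only: matrix_vector_mul_assoc[symmetric])
  then have "(transpose Q2 ** Q1) *v y = y"
    by (simp only: Q2 matrix_vector_mul_lid)
  moreover have "transpose Q2 ** Q1 \<in> G"
    using compact_orth_subgroupD(5,6)[OF G] assms(3,4) by blast
  ultimately have "transpose Q2 ** Q1 = mat 1"
    using free by blast
  then have "Q2 ** (transpose Q2 ** Q1) = Q2"
    by simp
  then show ?thesis
    by (simp add: matrix_mul_assoc Q2)
qed

lemma argminG_tendsto:
  assumes G: "compact_orth_subgroup G" and S: "argminG G x y = {S}"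
    and xs: "xs \<longlonglongrightarrow> x" and ys: "ys \<longlonglongrightarrow> y" and Qs: "\<And>n. Qs n \<in> argminG G (xs n) (ys n)"
  shows "Qs \<longlonglongrightarrow> S"
proof (rule ccontr)
  assume "\<not> Qs \<longlonglongrightarrow> S"
  then obtain e where "e > 0" and "\<not> eventually (\<lambda>n. dist (Qs n) S < e) sequentially"
    unfolding tendsto_iff by blast
  then have far: "infinite {n. e \<le> dist (Qs n) S}"
    by (simp add: cofinite_eq_sequentially[symmetric] eventually_cofinite not_less)
  define r where "r = enumerate {n. e \<le> dist (Qs n) S}"
  have r: "strict_mono r" "\<And>n. e \<le> dist (Qs (r n)) S"
    using strict_mono_enumerate[OF far] enumerate_in_set[OF far] by (auto simp: r_def)
  have "compact (G - ball S e)"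
    using compact_orth_subgroupD(1)[OF G] by (intro compact_diff open_ball)
  moreover have "\<forall>n. (Qs \<circ> r) n \<in> G - ball S e"
    using Qs r(2) by (simp add: argminG_iff dist_commute not_less)
  ultimately obtain l s where l: "l \<in> G - ball S e" and s: "strict_mono s"
    and lim: "(Qs \<circ> r \<circ> s) \<longlonglongrightarrow> l"
    using compact_imp_seq_compact unfolding seq_compact_def by blast
  define k where "k = r \<circ> s"
  have k: "strict_mono k"
    unfolding k_def using r(1) s by (rule strict_mono_o)
  have "match_cost l x y \<le> match_cost Q' x y" if "Q' \<in> G" for Q'
  proof (rule LIMSEQ_le)
    show "(\<lambda>n. match_cost (Qs (k n)) (xs (k n)) (ys (k n))) \<longlonglongrightarrow> match_cost l x y"
      using tendsto_match_cost[OF lim LIMSEQ_subseq_LIMSEQ[OF xs k] LIMSEQ_subseq_LIMSEQ[OF ys k]]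
      by (simp add: k_def o_def)
    show "(\<lambda>n. match_cost Q' (xs (k n)) (ys (k n))) \<longlonglongrightarrow> match_cost Q' x y"
      using tendsto_match_cost[OF tendsto_const LIMSEQ_subseq_LIMSEQ[OF xs k] LIMSEQ_subseq_LIMSEQ[OF ys k]]
      by (simp add: o_def)
    show "\<exists>N. \<forall>n\<ge>N. match_cost (Qs (k n)) (xs (k n)) (ys (k n)) \<le> match_cost Q' (xs (k n)) (ys (k n))"
      using Qs that by (auto simp: argminG_iff)
  qed
  with l have "l \<in> argminG G x y"
    by (simp add: argminG_iff)
  with S l \<open>e > 0\<close> show False
    by simp
qed

text \<open>Relates x to Q y, the point of the orbit of y nearest to x, for (x, y) in \<open>\<Gamma>\<close>; on the
  support of the optimal coupling this is the gradient of the convex potential \<open>\<psi>\<close>.\<close>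

definition orbit_match :: "'p::finite mat set \<Rightarrow> ('p vec \<times> 'p vec) set \<Rightarrow> 'p vec \<Rightarrow> 'p vec \<Rightarrow> bool" where
  "orbit_match G \<Gamma> x g \<longleftrightarrow> (\<exists>y Q. (x, y) \<in> \<Gamma> \<and> Q \<in> argminG G x y \<and> g = Q *v y)"

lemma monotone_rel_orbit_match:
  assumes G: "compact_orth_subgroup G" and \<Gamma>: "c_cyclically_monotone (costG G) \<Gamma>"
  shows "monotone_rel (orbit_match G \<Gamma>)"
  unfolding monotone_rel_def
proof (intro allI impI)
  fix x g x' g'
  assume "orbit_match G \<Gamma> x g" "orbit_match G \<Gamma> x' g'"
  then obtain y Q y' Q' where in_\<Gamma>: "(x, y) \<in> \<Gamma>" "(x', y') \<in> \<Gamma>"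
    and Q: "Q \<in> argminG G x y" and Q': "Q' \<in> argminG G x' y'" and "g = Q *v y" "g' = Q' *v y'"
    unfolding orbit_match_def by blast
  have "(\<Sum>i<2. costG G ([x, x'] ! i) ([y, y'] ! i))
      \<le> (\<Sum>i<2. costG G ([x, x'] ! i) ([y, y'] ! ((i + 1) mod 2)))"
    using \<Gamma> in_\<Gamma> unfolding c_cyclically_monotone_def
    by (elim allE[of _ 2] allE[of _ "(!) [x, x']"] allE[of _ "(!) [y, y']"])
      (auto simp: less_2_cases_iff)
  then have "costG G x y + costG G x' y' \<le> costG G x y' + costG G x' y"
    by (simp add: numeral_2_eq_2)
  moreover have "Q \<in> G" "Q' \<in> G" "orthogonal_matrix Q" "orthogonal_matrix Q'"
    using Q Q' compact_orth_subgroupD(4)[OF G] by (auto simp: argminG_iff)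
  ultimately have "match_cost Q x y + match_cost Q' x' y' \<le> match_cost Q' x y' + match_cost Q x' y"
    using costG_eq_match_cost[OF Q] costG_eq_match_cost[OF Q']
      costG_le_match_cost[of Q G x' y] costG_le_match_cost[of Q' G x y'] by linarith
  then show "0 \<le> (x - x') \<bullet> (g - g')"
    using \<open>orthogonal_matrix Q\<close> \<open>orthogonal_matrix Q'\<close> \<open>g = Q *v y\<close> \<open>g' = Q' *v y'\<close>
    by (simp add: match_cost_orthogonal algebra_simps)
qed

lemma closed_orbit_match_graph:
  fixes G :: "'p::finite mat set"
  assumes "closed G" "closed \<Gamma>"
  shows "closed {(x, y, Q). (x, y) \<in> \<Gamma> \<and> Q \<in> argminG G x y}"
proof -
  have "{(x, y, Q). (x, y) \<in> \<Gamma> \<and> Q \<in> argminG G x y} =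
      (\<lambda>w. (fst w, fst (snd w))) -` \<Gamma> \<inter> {(x, y, Q). Q \<in> argminG G x y}"
    by auto
  moreover have "closed ((\<lambda>w::'p vec \<times> 'p vec \<times> 'p mat. (fst w, fst (snd w))) -` \<Gamma>)"
    using assms(2) by (intro continuous_closed_vimage continuous_intros)
  ultimately show ?thesis
    using closed_argminG_graph[OF assms(1)] by auto
qed

lemma borel_jump_set_orbit_match:
  fixes G :: "'p::finite mat set"
  assumes "closed G" "closed \<Gamma>"
  shows "jump_set (orbit_match G \<Gamma>) b \<in> sets borel"
proof -
  define A where "A = {(x, y, Q). (x, y) \<in> \<Gamma> \<and> Q \<in> argminG G x y}"
  have "closed A"
    unfolding A_def using assms by (rule closed_orbit_match_graph)
  define C where "C k = {(x, p, p'). (x, p) \<in> A \<and> (x, p') \<in> A \<and>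
      (snd p *v fst p) \<bullet> b + 1 / real (Suc k) \<le> (snd p' *v fst p') \<bullet> b}" for k
  have "closed (C k)" for k
  proof -
    have C_eq: "C k = (\<lambda>w. (fst w, fst (snd w))) -` A \<inter> (\<lambda>w. (fst w, snd (snd w))) -` A \<inter>
        {w. (snd (fst (snd w)) *v fst (fst (snd w))) \<bullet> b + 1 / real (Suc k)
            \<le> (snd (snd (snd w)) *v fst (snd (snd w))) \<bullet> b}"
      by (auto simp: C_def)
    show ?thesis
      unfolding C_eq using \<open>closed A\<close>
      by (intro closed_Int continuous_closed_vimage closed_Collect_le continuous_intros)
  qed
  moreover have "jump_set (orbit_match G \<Gamma>) b = (\<Union>k. fst ` C k)"
  proof (intro equalityI subsetI)
    fix x assume "x \<in> jump_set (orbit_match G \<Gamma>) b"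
    then obtain y Q y' Q' where "(x, y, Q) \<in> A" "(x, y', Q') \<in> A" and
      less: "(Q *v y) \<bullet> b < (Q' *v y') \<bullet> b"
      unfolding jump_set_def orbit_match_def A_def by blast
    moreover obtain k where "1 / real (Suc k) < (Q' *v y') \<bullet> b - (Q *v y) \<bullet> b"
      using less reals_Archimedean by (metis diff_gt_0_iff_gt inverse_eq_divide)
    ultimately have "(x, (y, Q), (y', Q')) \<in> C k"
      by (simp add: C_def)
    then show "x \<in> (\<Union>k. fst ` C k)"
      by force
  next
    fix x assume "x \<in> (\<Union>k. fst ` C k)"
    then obtain k y Q y' Q' where "(x, (y, Q), (y', Q')) \<in> C k"
      by force
    then have "orbit_match G \<Gamma> x (Q *v y)" "orbit_match G \<Gamma> x (Q' *v y')"
      and "(Q *v y) \<bullet> b + 1 / real (Suc k) \<le> (Q' *v y') \<bullet> b"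
      unfolding orbit_match_def C_def A_def by auto
    moreover have "0 < 1 / real (Suc k)"
      by simp
    then have "(Q *v y) \<bullet> b < (Q' *v y') \<bullet> b"
      using \<open>(Q *v y) \<bullet> b + 1 / real (Suc k) \<le> (Q' *v y') \<bullet> b\<close>
        by linarith
    ultimately show "x \<in> jump_set (orbit_match G \<Gamma>) b"
      unfolding jump_set_def by blast
  qed
  ultimately show ?thesis
    by (auto intro: borel_fst_image_closed)
qed

lemma closed_msupport: "closed (msupport M)"
proof -
  have "- msupport M = \<Union>{U. open U \<and> \<not> 0 < emeasure M U}"
    unfolding msupport_def by blast
  then show ?thesis
    unfolding closed_def by auto
qed

lemma AE_in_msupport:
  fixes M :: "'a::second_countable_topology measure"
  assumes "sets M = sets borel"
  shows "AE z in M. z \<in> msupport M"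
proof -
  obtain \<B> :: "'a set set" where "countable \<B>" and "\<And>C. C \<in> \<B> \<Longrightarrow> open C"
    and \<B>: "\<And>S. open S \<Longrightarrow> \<exists>U. U \<subseteq> \<B> \<and> S = \<Union>U"
    using univ_second_countable by blast
  define N where "N = {U \<in> \<B>. emeasure M U = 0}"
  have "countable N" and "N \<subseteq> null_sets M"
    using \<open>countable \<B>\<close> \<open>\<And>C. C \<in> \<B> \<Longrightarrow> open C\<close> assms by (auto simp: N_def null_sets_def)
  then have "AE z in M. \<forall>U\<in>N. z \<notin> U"
    by (auto simp: AE_ball_countable intro: AE_not_in)
  then show ?thesis
  proof (rule eventually_mono)
    fix z assume z: "\<forall>U\<in>N. z \<notin> U"
    show "z \<in> msupport M"
      unfolding msupport_def
    proof (intro CollectI allI impI)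
      fix V assume V: "open V \<and> z \<in> V"
      then obtain C where C: "C \<in> \<B>" "C \<subseteq> V" "z \<in> C"
        using \<B> by blast
      have "emeasure M C \<le> emeasure M V"
        using C V \<open>\<And>C. C \<in> \<B> \<Longrightarrow> open C\<close> assms by (intro emeasure_mono) auto
      with z C show "emeasure M V > 0"
        by (auto simp: N_def)
    qed
  qed
qed

lemma null_sets_jump_sets_orbit_match:
  fixes G :: "'p::finite mat set"
  assumes G: "compact_orth_subgroup G" and "closed \<Gamma>" "c_cyclically_monotone (costG G) \<Gamma>"
  shows "(\<Union>b\<in>Basis. jump_set (orbit_match G \<Gamma>) b) \<in> null_sets lborel"
proof (intro null_sets_UN' countable_finite)
  fix b :: "'p vec" assume "b \<in> Basis"
  then show "jump_set (orbit_match G \<Gamma>) b \<in> null_sets lborel"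
    using assms compact_orth_subgroupD(2)[OF G]
    by (intro jump_set_null monotone_rel_orbit_match borel_jump_set_orbit_match) auto
qed simp

lemma argminG_singleton_off_jump_sets:
  assumes G: "compact_orth_subgroup G" and free: "\<forall>Q\<in>G. Q *v y = y \<longrightarrow> Q = mat 1"
    and "(x, y) \<in> \<Gamma>" and "x \<notin> (\<Union>b\<in>Basis. jump_set (orbit_match G \<Gamma>) b)"
  shows "\<exists>S. argminG G x y = {S}"
proof -
  obtain S where S: "S \<in> argminG G x y"
    using argminG_nonempty[OF G] by blast
  have "Q = S" if Q: "Q \<in> argminG G x y" for Q
  proof (rule orbit_point_determines_group_element[OF G free])
    show "Q \<in> G" "S \<in> G"
      using Q S by (auto simp: argminG_iff)
    show "Q *v y = S *v y"
      using single_valued_off_jump_sets assms(4) Q S \<open>(x, y) \<in> \<Gamma>\<close>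
      unfolding orbit_match_def by blast
  qed
  with S show ?thesis
    by blast
qed

lemma AE_density_not_in_null_set:
  assumes "f \<in> borel_measurable M" "N \<in> null_sets M"
  shows "AE x in density M f. x \<notin> N"
  using AE_not_in[OF assms(2)] unfolding AE_density[OF assms(1)]
  by (rule eventually_mono) simp

lemma AE_pushforward_in_full_set:
  assumes "sets \<mu> = sets borel" "R \<in> borel_measurable borel"
    and "prob_space \<nu>" "distr \<mu> borel R = \<nu>" "B \<in> sets borel" "emeasure \<nu> B = 1"
  shows "AE x in \<mu>. R x \<in> B"
proof -
  have "B \<in> sets \<nu>"
    using assms(4,5) by auto
  then have "AE y in \<nu>. y \<in> B"
    using prob_space.AE_in_set_eq_1[OF assms(3)] assms(6) by (simp add: measure_def)
  then have "AE y in distr \<mu> borel R. y \<in> B"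
    unfolding assms(4) .
  moreover have "R \<in> borel_measurable \<mu>"
    using assms(2) by (simp add: measurable_cong_sets[OF assms(1) refl])
  ultimately show ?thesis
    using assms(5) by (subst (asm) AE_distr_iff) auto
qed

lemma AE_distr_graph:
  fixes \<mu> :: "'a::second_countable_topology measure" and R :: "'a \<Rightarrow> 'b::second_countable_topology"
  assumes "sets \<mu> = sets borel" "R \<in> borel_measurable borel" "A \<in> sets borel" "C \<in> sets borel"
    and "AE x in \<mu>. x \<in> A" "AE x in \<mu>. R x \<in> C"
  shows "AE z in distr \<mu> borel (\<lambda>x. (x, R x)). z \<in> A \<times> C"
proof -
  have "(\<lambda>x. (x, R x)) \<in> \<mu> \<rightarrow>\<^sub>M borel \<Otimes>\<^sub>M borel"
    using assms(2) by (simp add: measurable_cong_sets[OF assms(1) refl])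
  moreover have "A \<times> C \<in> sets (borel \<Otimes>\<^sub>M borel)"
    using assms(3,4) by (rule pair_measureI)
  ultimately show ?thesis
    using assms(5,6) unfolding borel_prod by (subst AE_distr_iff) auto
qed

theorem mainTheorem19:
  fixes G :: "'p::finite mat set"
    and \<mu> \<nu> :: "'p vec measure"
    and B :: "'p vec set"
    and R :: "'p vec \<Rightarrow> 'p vec"
  assumes G: "compact_orth_subgroup G"
    and mu_prob: "prob_space \<mu>" and mu_sets: "sets \<mu> = sets borel"
    and mu_ac: "\<exists>f \<in> borel_measurable lborel. \<mu> = density lborel f"
    and nu_prob: "prob_space \<nu>" and nu_sets: "sets \<nu> = sets borel"
    and A1_B: "B \<in> sets borel" and A1_full: "emeasure \<nu> B = 1"
    and A1_orbit: "\<forall>x\<in>B. \<forall>Q\<in>G. Q *v x \<in> B \<longrightarrow> Q *v x = x"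
    and free: "\<forall>y\<in>B. \<forall>Q\<in>G. Q *v y = y \<longrightarrow> Q = mat 1"
    and R_meas: "R \<in> borel_measurable borel"
    and R_push: "distr \<mu> borel R = \<nu>"
    and R_ccm: "c_cyclically_monotone (costG G) (msupport (distr \<mu> borel (\<lambda>x. (x, R x))))"
  shows "AE z in distr \<mu> borel (\<lambda>x. (x, R x)).
           \<exists>S. argminG G (fst z) (snd z) = {S} \<and>
             (\<forall>xs ys Qs. xs \<longlonglongrightarrow> fst z \<longrightarrow> ys \<longlonglongrightarrow> snd z \<longrightarrow>
                 (\<forall>n. Qs n \<in> argminG G (xs n) (ys n)) \<longrightarrow> Qs \<longlonglongrightarrow> S)"
proof -
  define M where "M = distr \<mu> borel (\<lambda>x. (x, R x))"
  define N where "N = (\<Union>b\<in>Basis. jump_set (orbit_match G (msupport M)) b)"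
  have N_null: "N \<in> null_sets lborel"
    unfolding N_def using G closed_msupport R_ccm[folded M_def]
    by (rule null_sets_jump_sets_orbit_match)
  have N_borel: "N \<in> sets borel"
    using null_setsD2[OF N_null] by simp
  have "AE x in \<mu>. x \<in> - N"
    using mu_ac AE_density_not_in_null_set[OF _ N_null] by auto
  moreover have "AE x in \<mu>. R x \<in> B"
    by (rule AE_pushforward_in_full_set[OF mu_sets R_meas nu_prob R_push A1_B A1_full])
  ultimately have "AE z in M. z \<in> (- N) \<times> B"
    unfolding M_def by (rule AE_distr_graph[OF mu_sets R_meas borel_comp[OF N_borel] A1_B])
  moreover have "AE z in M. z \<in> msupport M"
    by (rule AE_in_msupport) (simp add: M_def)
  ultimately show ?thesis
    unfolding M_def[symmetric]
  proof eventually_elim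
    case (elim z)
    then have "(fst z, snd z) \<in> msupport M" "fst z \<notin> N" "snd z \<in> B"
      by auto
    then obtain S where "argminG G (fst z) (snd z) = {S}"
      using argminG_singleton_off_jump_sets[OF G] free unfolding N_def by blast
    then show ?case
      using argminG_tendsto[OF G] by blast
  qed
qed

end
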